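(* Let $z_1,z_2,z_3,z_4\in\mathbb{C}$ be the vertices of a convex quadrilateral, labelled in cyclic order around its boundary, and for $j=1,\dots,4$ (indices mod $4$) let $$\alpha_j=\angle z_{j+1}z_jz_{j+2},\qquad \beta_j=\angle z_{j+2}z_jz_{j-1},\qquad \gamma_j=\angle z_{j-1}z_jz_{j+1}.$$ Then $$S_1=\sum_{j=1}^4(\cos\alpha_j+\cos\beta_j+\cos\gamma_j)\ \ge\ 4 .$$
   Context: Angles $\angle XYZ\in[0,\pi]$ denote the usual unsigned angle at $Y$ between the segments $YX$ and $YZ$. *)

theory Defs
  imports "HOL-Analysis.Analysis"
begin

definition angle :: "complex \<Rightarrow> complex \<Rightarrow> complex \<Rightarrow> real" where
  "angle x y z = arccos (((x - y) \<bullet> (z - y)) / (norm (x - y) * norm (z - y)))"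

(* signed cross product (b - a) x (c - a): positive iff c is strictly left of the
   directed line a -> b *)
definition cross :: "complex \<Rightarrow> complex \<Rightarrow> complex \<Rightarrow> real" where
  "cross a b c = Im (cnj (b - a) * (c - a))"

(* v 0, v 1, v 2, v 3 are the vertices of a (non-degenerate) convex quadrilateral,
   listed in cyclic order around its boundary (either orientation): for every edge
   v j v (j+1), the two remaining vertices lie strictly on the same side of the
   line through that edge, and the side is the same for all edges. *)
definition convex_quad :: "(nat \<Rightarrow> complex) \<Rightarrow> bool" where
  "convex_quad v \<longleftrightarrow>
     (\<forall>j<4. \<forall>k\<in>{2,3}. cross (v j) (v ((j+1) mod 4)) (v ((j+k) mod 4)) > 0) \<or>
     (\<forall>j<4. \<forall>k\<in>{2,3}. cross (v j) (v ((j+1) mod 4)) (v ((j+k) mod 4)) < 0)"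

end

theory Submission
  imports Defs
begin

text \<open>The twelve angles are exactly the angles of the four triangles spanned by three of the
  four vertices.  By the law of cosines, the cosines of the angles of a triangle with sides
  \<open>a, b, c\<close> satisfy \<open>cos A + cos B + cos C - 1 = (a+b-c)(b+c-a)(c+a-b) / (2abc)\<close>,
  which is nonnegative by the triangle inequality.  Convexity is only needed to make the four
  vertices pairwise distinct.\<close>

lemma cos_angle_law_of_cosines:
  assumes "x \<noteq> y" "z \<noteq> y"
  shows "cos (angle x y z) =
    ((norm (x - y))\<^sup>2 + (norm (z - y))\<^sup>2 - (norm (x - z))\<^sup>2) / (2 * norm (x - y) * norm (z - y))"
proof -
  define p where "p = norm (x - y) * norm (z - y)"
  define i where "i = (x - y) \<bullet> (z - y)"
  have "p > 0" using assms unfolding p_def by auto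
  moreover have "\<bar>i\<bar> \<le> p" unfolding i_def p_def by (rule Cauchy_Schwarz_ineq2)
  ultimately have "\<bar>i / p\<bar> \<le> 1" by (simp add: abs_divide)
  then have "cos (angle x y z) = i / p"
    unfolding angle_def i_def[symmetric] p_def[symmetric] by (rule cos_arccos_abs)
  also have "i = ((norm (x - y))\<^sup>2 + (norm (z - y))\<^sup>2 - (norm (x - z))\<^sup>2) / 2"
    unfolding i_def using dot_norm_neg[of "x - y" "z - y"] by simp
  finally show ?thesis unfolding p_def by simp
qed

lemma law_of_cosines_sum_ge_1:
  fixes a b c :: real
  assumes "a > 0" "b > 0" "c > 0" "a \<le> b + c" "b \<le> a + c" "c \<le> a + b"
  shows "(b\<^sup>2 + c\<^sup>2 - a\<^sup>2) / (2*b*c) + (a\<^sup>2 + c\<^sup>2 - b\<^sup>2) / (2*a*c) + (a\<^sup>2 + b\<^sup>2 - c\<^sup>2) / (2*a*b) \<ge> 1"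
proof -
  have "(b\<^sup>2 + c\<^sup>2 - a\<^sup>2) / (2*b*c) + (a\<^sup>2 + c\<^sup>2 - b\<^sup>2) / (2*a*c) + (a\<^sup>2 + b\<^sup>2 - c\<^sup>2) / (2*a*b) - 1
      = (a+b-c) * (b+c-a) * (c+a-b) / (2*a*b*c)"
    using assms by (simp add: field_simps) (simp add: algebra_simps power2_eq_square)
  moreover have "(a+b-c) * (b+c-a) * (c+a-b) / (2*a*b*c) \<ge> 0"
    using assms by (intro divide_nonneg_pos mult_nonneg_nonneg) auto
  ultimately show ?thesis by linarith
qed

lemma angle_commute: "angle x y z = angle z y x"
  unfolding angle_def by (simp add: inner_commute mult.commute)

lemma cos_angle_triangle_sum_ge_1:
  assumes "p \<noteq> q" "q \<noteq> r" "p \<noteq> r"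
  shows "cos (angle q p r) + cos (angle p q r) + cos (angle p r q) \<ge> 1"
proof -
  define a b c where "a = dist q r" and "b = dist p r" and "c = dist p q"
  have sides: "norm (q - p) = c" "norm (r - p) = b" "norm (q - r) = a"
    "norm (p - q) = c" "norm (r - q) = a" "norm (p - r) = b"
    unfolding a_def b_def c_def by (simp_all add: dist_norm norm_minus_commute)
  have "a > 0" "b > 0" "c > 0" using assms unfolding a_def b_def c_def by auto
  moreover have "a \<le> b + c" "b \<le> a + c" "c \<le> a + b" unfolding a_def b_def c_def
    using dist_triangle[of q r p] dist_triangle[of p r q] dist_triangle[of p q r]
    by (simp_all add: dist_commute)
  moreover have "cos (angle q p r) = (b\<^sup>2 + c\<^sup>2 - a\<^sup>2) / (2*b*c)"
    "cos (angle p q r) = (a\<^sup>2 + c\<^sup>2 - b\<^sup>2) / (2*a*c)"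
    "cos (angle p r q) = (a\<^sup>2 + b\<^sup>2 - c\<^sup>2) / (2*a*b)"
    using assms by (simp_all add: cos_angle_law_of_cosines sides ac_simps)
  ultimately show ?thesis using law_of_cosines_sum_ge_1 by simp
qed

lemma cross_nonzero_imp_distinct: "cross a b c \<noteq> 0 \<Longrightarrow> a \<noteq> b \<and> a \<noteq> c \<and> b \<noteq> c"
  by (auto simp: cross_def algebra_simps)

lemma convex_quad_cross_nonzero:
  assumes "convex_quad v" "j < 4" "k \<in> {2, 3}"
  shows "cross (v j) (v ((j + 1) mod 4)) (v ((j + k) mod 4)) \<noteq> 0"
proof -
  have "(\<forall>k\<in>{2::nat, 3}. cross (v j) (v ((j + 1) mod 4)) (v ((j + k) mod 4)) > 0) \<or>
        (\<forall>k\<in>{2::nat, 3}. cross (v j) (v ((j + 1) mod 4)) (v ((j + k) mod 4)) < 0)"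
    using assms(1,2) unfolding convex_quad_def by blast
  then show ?thesis using assms(3) by (metis less_irrefl)
qed

lemma convex_quad_distinct:
  assumes "convex_quad v" "j < 4" "k \<in> {1, 2, 3}"
  shows "v j \<noteq> v ((j + k) mod 4)"
  using cross_nonzero_imp_distinct[OF convex_quad_cross_nonzero[OF assms(1,2), of 2]]
    cross_nonzero_imp_distinct[OF convex_quad_cross_nonzero[OF assms(1,2), of 3]] assms(3)
  by auto

theorem corollary1:
  fixes z1 z2 z3 z4 :: complex
  defines "v \<equiv> (\<lambda>j::nat. [z1, z2, z3, z4] ! (j mod 4))"
  assumes "convex_quad v"
  shows "(\<Sum>j<4. cos (angle (v (j+1)) (v j) (v (j+2)))
                + cos (angle (v (j+2)) (v j) (v (j+3)))
                + cos (angle (v (j+3)) (v j) (v (j+1)))) \<ge> 4"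
proof -
  have distinct: "z1 \<noteq> z2" "z1 \<noteq> z3" "z1 \<noteq> z4" "z2 \<noteq> z3" "z2 \<noteq> z4" "z3 \<noteq> z4"
    using convex_quad_distinct[OF assms(2), of 0 1] convex_quad_distinct[OF assms(2), of 0 2]
      convex_quad_distinct[OF assms(2), of 0 3] convex_quad_distinct[OF assms(2), of 1 1]
      convex_quad_distinct[OF assms(2), of 1 2] convex_quad_distinct[OF assms(2), of 2 1]
    by (simp_all add: v_def)
  have "{..<4::nat} = {0, 1, 2, 3}" by auto
  then have "(\<Sum>j<4. cos (angle (v (j+1)) (v j) (v (j+2)))
                + cos (angle (v (j+2)) (v j) (v (j+3)))
                + cos (angle (v (j+3)) (v j) (v (j+1))))
     = (cos (angle z2 z1 z3) + cos (angle z1 z2 z3) + cos (angle z1 z3 z2))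
     + (cos (angle z2 z1 z4) + cos (angle z1 z2 z4) + cos (angle z1 z4 z2))
     + (cos (angle z3 z1 z4) + cos (angle z1 z3 z4) + cos (angle z1 z4 z3))
     + (cos (angle z3 z2 z4) + cos (angle z2 z3 z4) + cos (angle z2 z4 z3))"
    by (simp add: v_def angle_commute[of z4 z1 z2] angle_commute[of z4 z2 z1]
        angle_commute[of z4 z3 z1] angle_commute[of z3 z4 z1])
  also have "\<dots> \<ge> 4"
    using cos_angle_triangle_sum_ge_1[of z1 z2 z3] cos_angle_triangle_sum_ge_1[of z1 z2 z4]
      cos_angle_triangle_sum_ge_1[of z1 z3 z4] cos_angle_triangle_sum_ge_1[of z2 z3 z4] distinct
    by simp
  finally show ?thesis .
qed

end
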